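(* Let $T\colon\mathbb R\to\mathbb R$ be nonexpansive with $\operatorname{Fix}T=\varnothing$, let $v:=P_{\overline{\operatorname{ran}}(\mathrm{Id}-T)}0$ and assume $v\in\operatorname{ran}(\mathrm{Id}-T)$. Then: (i) for every $x\in\mathbb R$, the sequence $(T^nx+nv)_{n\in\mathbb N}$ converges; (ii) the map $\mathbb R\to\mathbb R\colon x\mapsto\lim_{n\to\infty}(T^nx+nv)$ is nonexpansive; (iii) if $T$ is firmly nonexpansive, then $x\mapsto\lim_{n\to\infty}(T^nx+nv)$ is firmly nonexpansive.
   Context: $v$ is the element of minimal absolute value of the closure of $\operatorname{ran}(\mathrm{Id}-T)$. A map $T$ is firmly nonexpansive if $\|Tx-Ty\|^2+\|(\mathrm{Id}-T)x-(\mathrm{Id}-T)y\|^2\le\|x-y\|^2$ for all $x,y$. *)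

theory Defs
  imports "HOL-Analysis.Analysis"
begin

definition nonexpansive :: "(real \<Rightarrow> real) \<Rightarrow> bool" where
  "nonexpansive T \<longleftrightarrow> (\<forall>x y. \<bar>T x - T y\<bar> \<le> \<bar>x - y\<bar>)"

definition firmly_nonexpansive :: "(real \<Rightarrow> real) \<Rightarrow> bool" where
  "firmly_nonexpansive T \<longleftrightarrow>
     (\<forall>x y. (T x - T y)\<^sup>2 + ((x - T x) - (y - T y))\<^sup>2 \<le> (x - y)\<^sup>2)"

definition min_disp :: "(real \<Rightarrow> real) \<Rightarrow> real" where
  "min_disp T = closest_point (closure (range (\<lambda>x. x - T x))) 0"

end

theory Submission
  imports Defs
begin

text \<open>On the real line the displacement map \<open>g x = x - T x\<close> of a nonexpansive \<open>T\<close> is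
  continuous and nondecreasing. Without fixed points \<open>g\<close> never vanishes, so by the intermediate
  value theorem it has the sign of \<open>v = g x\<^sub>0\<close>; minimality of \<open>\<bar>v\<bar>\<close> then gives \<open>v (g y - v) \<ge> 0\<close>
  everywhere. Hence \<open>T\<^sup>n x + n v\<close> is monotone in \<open>n\<close>, and it stays within \<open>\<bar>x - x\<^sub>0\<bar>\<close> of \<open>x\<^sub>0\<close>
  because the orbit of \<open>x\<^sub>0\<close> is \<open>x\<^sub>0 - n v\<close>. The limit map inherits (firm) nonexpansiveness
  from the maps \<open>T\<^sup>n + n v\<close>, since both properties are closed pointwise conditions.\<close>

lemma nonexpansive_continuous_on: "nonexpansive T \<Longrightarrow> continuous_on S T"
  by (rule lipschitz_on_continuous_on[of 1])
     (auto simp: lipschitz_on_def nonexpansive_def dist_real_def)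

lemma nonexpansive_funpow: "nonexpansive T \<Longrightarrow> nonexpansive (T ^^ n)"
  unfolding nonexpansive_def by (induction n) (simp, metis funpow.simps(2) o_apply order_trans)

lemma nonexpansive_displacement_monotone:
  assumes "nonexpansive T"
  shows "0 \<le> ((x - T x) - (y - T y)) * (x - y)"
proof -
  have "(T x - T y) * (x - y) \<le> \<bar>T x - T y\<bar> * \<bar>x - y\<bar>"
    by (metis abs_ge_self abs_mult)
  also have "\<dots> \<le> \<bar>x - y\<bar> * \<bar>x - y\<bar>"
    using assms by (intro mult_right_mono) (auto simp: nonexpansive_def)
  finally show ?thesis
    by (simp add: algebra_simps abs_mult_self_eq)
qed

lemma abs_min_disp_le: "\<bar>min_disp T\<bar> \<le> \<bar>y - T y\<bar>"
proof -
  have "dist 0 (min_disp T) \<le> dist 0 (y - T y)"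
    unfolding min_disp_def by (rule closest_point_le) (auto intro: closure_subset[THEN subsetD])
  then show ?thesis by (simp add: dist_real_def)
qed

lemma continuous_nonvanishing_same_sign:
  fixes f :: "real \<Rightarrow> real"
  assumes cont: "continuous_on UNIV f" and nz: "\<And>x. f x \<noteq> 0"
  shows "0 < f x * f y"
proof -
  have "0 < f x * f y" if "x \<le> y" for x y
  proof (rule ccontr)
    assume "\<not> 0 < f x * f y"
    then consider "f x \<le> 0" "0 \<le> f y" | "f y \<le> 0" "0 \<le> f x"
      using nz[of x] nz[of y] by (auto simp: zero_less_mult_iff not_less)
    then obtain z where "f z = 0"
    proof cases
      case 1
      then show ?thesis
        using IVT'[of f x 0 y] cont \<open>x \<le> y\<close> that continuous_on_subset by blast
    next
      case 2
      then show ?thesis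
        using IVT2'[of f y 0 x] cont \<open>x \<le> y\<close> that continuous_on_subset by blast
    qed
    with nz show False by blast
  qed
  then show ?thesis
    by (metis mult.commute nle_le)
qed

lemma min_disp_displacement_bound:
  assumes ne: "nonexpansive T" and nofix: "\<And>x. T x \<noteq> x"
    and x0: "x0 - T x0 = min_disp T"
  shows "0 \<le> min_disp T * ((y - T y) - min_disp T)"
proof -
  have "continuous_on UNIV (\<lambda>x. x - T x)"
    by (intro continuous_intros nonexpansive_continuous_on[OF ne])
  moreover have "x - T x \<noteq> 0" for x
    using nofix[of x] by simp
  ultimately have "0 < (y - T y) * min_disp T"
    unfolding x0[symmetric] by (rule continuous_nonvanishing_same_sign)
  then consider "0 < min_disp T" "0 < y - T y" | "min_disp T < 0" "y - T y < 0"
    by (auto simp: zero_less_mult_iff)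
  then show ?thesis
    using abs_min_disp_le[of T y] by cases (auto intro: mult_nonneg_nonneg mult_nonpos_nonpos)
qed

lemma funpow_linear_of_displacement_bound:
  assumes ne: "nonexpansive T"
    and bound: "\<And>y. 0 \<le> v * ((y - T y) - v)"
    and x0: "x0 - T x0 = v"
  shows "(T ^^ n) x0 = x0 - real n * v"
proof (induction n)
  case 0
  then show ?case by simp
next
  case (Suc n)
  let ?z = "x0 - real n * v"
  have "0 \<le> ((x0 - T x0) - (?z - T ?z)) * (x0 - ?z)"
    by (rule nonexpansive_displacement_monotone[OF ne])
  then have "real n * (v * ((?z - T ?z) - v)) \<le> 0"
    using x0 by (simp add: algebra_simps)
  with bound[of ?z] have "real n * (v * ((?z - T ?z) - v)) = 0"
    by (meson antisym mult_nonneg_nonneg of_nat_0_le_iff)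
  then have "n = 0 \<or> v = 0 \<or> ?z - T ?z = v"
    by simp
  then have "T ?z = ?z - v"
    using x0 by auto
  with Suc.IH have "(T ^^ Suc n) x0 = ?z - v"
    by simp
  then show ?case
    by (simp add: algebra_simps)
qed

lemma convergent_shifted_orbit:
  assumes ne: "nonexpansive T" and "v \<noteq> 0"
    and bound: "\<And>y. 0 \<le> v * ((y - T y) - v)"
    and x0: "x0 - T x0 = v"
  shows "convergent (\<lambda>n. (T ^^ n) x + real n * v)"
    (is "convergent ?a")
proof (rule Bseq_monoseq_convergent)
  show "Bseq ?a"
  proof (rule BseqI')
    fix n
    have "\<bar>(T ^^ n) x - (T ^^ n) x0\<bar> \<le> \<bar>x - x0\<bar>"
      using nonexpansive_funpow[OF ne] by (simp add: nonexpansive_def)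
    then show "norm (?a n) \<le> \<bar>x0\<bar> + \<bar>x - x0\<bar>"
      using funpow_linear_of_displacement_bound[OF ne bound x0, of n] by simp
  qed
  have step: "v * (?a (Suc n) - ?a n) \<le> 0" for n
  proof -
    have "v * (?a (Suc n) - ?a n) = - (v * (((T ^^ n) x - T ((T ^^ n) x)) - v))"
      by (simp add: algebra_simps)
    with bound[of "(T ^^ n) x"] show ?thesis by linarith
  qed
  show "monoseq ?a"
  proof (cases "v > 0")
    case True
    then have "?a (Suc n) \<le> ?a n" for n
      using step[of n] by (simp add: mult_le_0_iff)
    then show ?thesis by (simp add: monoseq_Suc)
  next
    case False
    with \<open>v \<noteq> 0\<close> have "?a n \<le> ?a (Suc n)" for n
      using step[of n] by (simp add: mult_le_0_iff)
    then show ?thesis by (simp add: monoseq_Suc)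
  qed
qed

lemma nonexpansive_tendsto:
  assumes "\<And>n. nonexpansive (F n)" and "\<And>x. (\<lambda>n. F n x) \<longlonglongrightarrow> L x"
  shows "nonexpansive L"
  unfolding nonexpansive_def
proof (intro allI)
  fix x y
  have "(\<lambda>n. \<bar>F n x - F n y\<bar>) \<longlonglongrightarrow> \<bar>L x - L y\<bar>"
    by (intro tendsto_intros assms(2))
  then show "\<bar>L x - L y\<bar> \<le> \<bar>x - y\<bar>"
    by (rule LIMSEQ_le_const2) (use assms(1) in \<open>auto simp: nonexpansive_def\<close>)
qed

lemma firmly_nonexpansive_iff_product:
  "firmly_nonexpansive f \<longleftrightarrow> (\<forall>x y. 0 \<le> (f x - f y) * ((x - y) - (f x - f y)))"
proof -
  have "(f x - f y)\<^sup>2 + ((x - f x) - (y - f y))\<^sup>2 + 2 * ((f x - f y) * ((x - y) - (f x - f y)))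
      = (x - y)\<^sup>2" for x y
    by (simp add: power2_eq_square algebra_simps)
  then have "(f x - f y)\<^sup>2 + ((x - f x) - (y - f y))\<^sup>2 \<le> (x - y)\<^sup>2
      \<longleftrightarrow> 0 \<le> (f x - f y) * ((x - y) - (f x - f y))" for x y
    by (smt (verit))
  then show ?thesis
    unfolding firmly_nonexpansive_def by blast
qed

lemma firmly_nonexpansive_iff_mono:
  "firmly_nonexpansive f \<longleftrightarrow> (\<forall>x y. x \<le> y \<longrightarrow> f x \<le> f y \<and> f y - f x \<le> y - x)"
  unfolding firmly_nonexpansive_iff_product
proof (intro iffI allI impI)
  fix x y :: real
  assume "\<forall>x y. 0 \<le> (f x - f y) * ((x - y) - (f x - f y))" and "x \<le> y"
  then have "0 \<le> (f y - f x) * ((y - x) - (f y - f x))" by blast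
  with \<open>x \<le> y\<close> show "f x \<le> f y \<and> f y - f x \<le> y - x"
    by (smt (verit) mult_nonneg_nonpos mult_nonpos_nonneg mult_less_0_iff)
next
  fix x y :: real
  assume mono: "\<forall>x y. x \<le> y \<longrightarrow> f x \<le> f y \<and> f y - f x \<le> y - x"
  show "0 \<le> (f x - f y) * ((x - y) - (f x - f y))"
  proof (cases "x \<le> y")
    case True
    with mono have "0 \<le> (f y - f x) * ((y - x) - (f y - f x))" by simp
    then show ?thesis by (simp add: algebra_simps)
  next
    case False
    with mono show ?thesis by simp
  qed
qed

lemma firmly_nonexpansive_funpow:
  "firmly_nonexpansive T \<Longrightarrow> firmly_nonexpansive (T ^^ n)"
  unfolding firmly_nonexpansive_iff_mono
  by (induction n) (auto, smt (verit))

lemma firmly_nonexpansive_tendsto: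
  assumes "\<And>n. firmly_nonexpansive (F n)" and "\<And>x. (\<lambda>n. F n x) \<longlonglongrightarrow> L x"
  shows "firmly_nonexpansive L"
  unfolding firmly_nonexpansive_iff_product
proof (intro allI)
  fix x y
  have "(\<lambda>n. (F n x - F n y) * ((x - y) - (F n x - F n y)))
      \<longlonglongrightarrow> (L x - L y) * ((x - y) - (L x - L y))"
    by (intro tendsto_intros assms(2))
  then show "0 \<le> (L x - L y) * ((x - y) - (L x - L y))"
    by (rule LIMSEQ_le_const) (use assms(1) in \<open>auto simp: firmly_nonexpansive_iff_product\<close>)
qed

theorem proposition2p6:
  fixes T :: "real \<Rightarrow> real"
  assumes ne: "nonexpansive T"
    and nofix: "{x. T x = x} = {}"
    and vran: "min_disp T \<in> range (\<lambda>x. x - T x)"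
  shows "(\<forall>x. convergent (\<lambda>n. (T ^^ n) x + real n * min_disp T))
    \<and> nonexpansive (\<lambda>x. lim (\<lambda>n. (T ^^ n) x + real n * min_disp T))
    \<and> (firmly_nonexpansive T \<longrightarrow>
         firmly_nonexpansive (\<lambda>x. lim (\<lambda>n. (T ^^ n) x + real n * min_disp T)))"
proof -
  obtain x0 where x0: "x0 - T x0 = min_disp T"
    using vran by auto
  have nofix': "T x \<noteq> x" for x
    using nofix by auto
  have "min_disp T \<noteq> 0"
    using x0 nofix'[of x0] by auto
  define F where "F = (\<lambda>n x. (T ^^ n) x + real n * min_disp T)"
  have conv: "convergent (\<lambda>n. F n x)" for x
    unfolding F_def using \<open>min_disp T \<noteq> 0\<close> min_disp_displacement_bound[OF ne nofix' x0] x0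
    by (rule convergent_shifted_orbit[OF ne])
  define L where "L = (\<lambda>x. lim (\<lambda>n. F n x))"
  have lim: "(\<lambda>n. F n x) \<longlonglongrightarrow> L x" for x
    using conv by (simp add: L_def convergent_LIMSEQ_iff)
  have "nonexpansive L"
    by (rule nonexpansive_tendsto[OF _ lim])
       (use nonexpansive_funpow[OF ne] in \<open>simp add: F_def nonexpansive_def\<close>)
  moreover have "firmly_nonexpansive L" if "firmly_nonexpansive T"
    by (rule firmly_nonexpansive_tendsto[OF _ lim])
       (use firmly_nonexpansive_funpow[OF that] in \<open>simp add: F_def firmly_nonexpansive_def algebra_simps\<close>)
  ultimately show ?thesis
    using conv unfolding L_def F_def by blast
qed

end
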